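(* For any special object $L$ of $\mathcal V$, one has $\mathbb O_L(u)=(-1)^t\dfrac{m_L(-u)}{m_L(u)}$.
   Context: Let $\Bbbk$ be a field of characteristic $\neq2$, $t\in\{0,1\}$, and let $\mathcal{NB}_t$ be the nil-Brauer category, here regarded as an ungraded strict $\Bbbk$-linear monoidal category (tensor $\star$, unit $\mathbb1$, composition $\circ$) generated by an object $B$ and morphisms $x:B\to B$, $\tau:B\star B\to B\star B$, $\cap:B\star B\to\mathbb1$, $\cup:\mathbb1\to B\star B$ with relations ($1=1_B$): $\tau\circ\tau=0$; $(\tau\star1)\circ(1\star\tau)\circ(\tau\star1)=(1\star\tau)\circ(\tau\star1)\circ(1\star\tau)$; $\cap\circ\cup=t1_{\mathbb1}$; $(\cap\star1)\circ(1\star\cup)=1=(1\star\cap)\circ(\cup\star1)$; $\cap\circ\tau=0$; $(1\star\cap)\circ(\tau\star1)=(\cap\star1)\circ(1\star\tau)$; $(x\star1)\circ\tau-\tau\circ(1\star x)=1\star1-\cup\circ\cap$; $\cap\circ(1\star x)=-\cap\circ(x\star1)$. Let $\mathcal V$ be a strict $\mathcal{NB}_t$-module category: a $\Bbbk$-linear category with a strict $\Bbbk$-linear monoidal functor $\mu$ from $\mathcal{NB}_t$ to the monoidal category of $\Bbbk$-linear endofunctors of $\mathcal V$ and natural transformations; write $B$ also for $\mu(B)$ and $s_V=\mu(s)_V$. An object $L$ of $\mathcal V$ is special if $\mathrm{End}_{\mathcal V}(L)=\Bbbk$ and $\mathrm{End}_{\mathcal V}(BL)$ is finite-dimensional; $m_L(x)$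 denotes the (monic) minimal polynomial of $x_L:BL\to BL$ (equal to $1$ if $BL=0$). Let $b_r:=\cap\circ(1\star x^r)\circ\cup\in\mathrm{End}(\mathbb1)$ and $\mathbb O(u):=(-1)^t\big(1_{\mathbb1}-2u\sum_{r\ge0}u^{-r-1}b_r\big)\in\mathrm{End}(\mathbb1)[\![u^{-1}]\!]$. For special $L$, $\mu(\mathbb O(u))_L$ acts on $L$ as multiplication by a power series $\mathbb O_L(u)\in\Bbbk[\![u^{-1}]\!]$. *)

theory Defs
  imports "HOL-Computational_Algebra.Computational_Algebra"
begin

text \<open>Composition: cmp g f = g o f.\<close>

record ('o, 'm, 'k) lincat =
  Hom   :: "'o \<Rightarrow> 'o \<Rightarrow> 'm set"
  cmp   :: "'m \<Rightarrow> 'm \<Rightarrow> 'm"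
  idm   :: "'o \<Rightarrow> 'm"
  madd  :: "'m \<Rightarrow> 'm \<Rightarrow> 'm"
  msc   :: "'k \<Rightarrow> 'm \<Rightarrow> 'm"
  mzero :: "'o \<Rightarrow> 'o \<Rightarrow> 'm"

definition msub :: "('o, 'm, 'k::field) lincat \<Rightarrow> 'm \<Rightarrow> 'm \<Rightarrow> 'm" where
  "msub C f g = madd C f (msc C (-1) g)"

definition is_lincat :: "('o, 'm, 'k::field) lincat \<Rightarrow> bool" where
  "is_lincat C \<longleftrightarrow>
    (\<forall>a b c d f. f \<in> Hom C a b \<longrightarrow> f \<in> Hom C c d \<longrightarrow> a = c \<and> b = d) \<and>
    (\<forall>a. idm C a \<in> Hom C a a) \<and>
    (\<forall>a b c f g. f \<in> Hom C a b \<longrightarrow> g \<in> Hom C b c \<longrightarrow> cmp C g f \<in> Hom C a c) \<and>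
    (\<forall>a b c d f g h. f \<in> Hom C a b \<longrightarrow> g \<in> Hom C b c \<longrightarrow> h \<in> Hom C c d \<longrightarrow>
        cmp C h (cmp C g f) = cmp C (cmp C h g) f) \<and>
    (\<forall>a b f. f \<in> Hom C a b \<longrightarrow> cmp C f (idm C a) = f \<and> cmp C (idm C b) f = f) \<and>
    \<comment> \<open>vector space structure on each hom-set\<close>
    (\<forall>a b. mzero C a b \<in> Hom C a b) \<and>
    (\<forall>a b f g. f \<in> Hom C a b \<longrightarrow> g \<in> Hom C a b \<longrightarrow> madd C f g \<in> Hom C a b) \<and>
    (\<forall>a b c f. f \<in> Hom C a b \<longrightarrow> msc C c f \<in> Hom C a b) \<and>
    (\<forall>a b f g h. f \<in> Hom C a b \<longrightarrow> g \<in> Hom C a b \<longrightarrow> h \<in> Hom C a b \<longrightarrow>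
        madd C (madd C f g) h = madd C f (madd C g h)) \<and>
    (\<forall>a b f g. f \<in> Hom C a b \<longrightarrow> g \<in> Hom C a b \<longrightarrow> madd C f g = madd C g f) \<and>
    (\<forall>a b f. f \<in> Hom C a b \<longrightarrow> madd C f (mzero C a b) = f) \<and>
    (\<forall>a b f. f \<in> Hom C a b \<longrightarrow> (\<exists>g \<in> Hom C a b. madd C f g = mzero C a b)) \<and>
    (\<forall>a b f. f \<in> Hom C a b \<longrightarrow> msc C 1 f = f) \<and>
    (\<forall>a b c d f. f \<in> Hom C a b \<longrightarrow> msc C c (msc C d f) = msc C (c * d) f) \<and>
    (\<forall>a b c d f. f \<in> Hom C a b \<longrightarrow> msc C (c + d) f = madd C (msc C c f) (msc C d f)) \<and>
    (\<forall>a b c f g. f \<in> Hom C a b \<longrightarrow> g \<in> Hom C a b \<longrightarrow>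
        msc C c (madd C f g) = madd C (msc C c f) (msc C c g)) \<and>
    \<comment> \<open>bilinearity of composition\<close>
    (\<forall>a b c f1 f2 g. f1 \<in> Hom C a b \<longrightarrow> f2 \<in> Hom C a b \<longrightarrow> g \<in> Hom C b c \<longrightarrow>
        cmp C g (madd C f1 f2) = madd C (cmp C g f1) (cmp C g f2)) \<and>
    (\<forall>a b c f g1 g2. f \<in> Hom C a b \<longrightarrow> g1 \<in> Hom C b c \<longrightarrow> g2 \<in> Hom C b c \<longrightarrow>
        cmp C (madd C g1 g2) f = madd C (cmp C g1 f) (cmp C g2 f)) \<and>
    (\<forall>a b c k f g. f \<in> Hom C a b \<longrightarrow> g \<in> Hom C b c \<longrightarrow>
        cmp C g (msc C k f) = msc C k (cmp C g f) \<and> cmp C (msc C k g) f = msc C k (cmp C g f))"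

definition lincomb :: "('o, 'm, 'k::field) lincat \<Rightarrow> 'o \<Rightarrow> 'o \<Rightarrow> ('k \<times> 'm) list \<Rightarrow> 'm" where
  "lincomb C a b ps = foldr (\<lambda>(c, g) acc. madd C (msc C c g) acc) ps (mzero C a b)"

definition findim_hom :: "('o, 'm, 'k::field) lincat \<Rightarrow> 'o \<Rightarrow> 'o \<Rightarrow> bool" where
  "findim_hom C a b \<longleftrightarrow>
    (\<exists>bs. set bs \<subseteq> Hom C a b \<and>
       (\<forall>f \<in> Hom C a b. \<exists>cs. length cs = length bs \<and> f = lincomb C a b (zip cs bs)))"

fun mpow :: "('o, 'm, 'k) lincat \<Rightarrow> 'o \<Rightarrow> 'm \<Rightarrow> nat \<Rightarrow> 'm" where
  "mpow C a f 0 = idm C a"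
| "mpow C a f (Suc n) = cmp C f (mpow C a f n)"

definition peval :: "('o, 'm, 'k::field) lincat \<Rightarrow> 'o \<Rightarrow> 'k poly \<Rightarrow> 'm \<Rightarrow> 'm" where
  "peval C a p f = lincomb C a a (map (\<lambda>i. (coeff p i, mpow C a f i)) [0..<Suc (degree p)])"

definition minpoly :: "('o, 'm, 'k::field) lincat \<Rightarrow> 'o \<Rightarrow> 'm \<Rightarrow> 'k poly" where
  "minpoly C a f = (THE p. lead_coeff p = 1 \<and> peval C a p f = mzero C a a \<and>
      (\<forall>q. q \<noteq> 0 \<and> peval C a q f = mzero C a a \<longrightarrow> degree p \<le> degree q))"

text \<open>Since NB_t is presented by generators and relations, a strict k-linear monoidal functor
  mu : NB_t -> End(V) amounts to: a k-linear endofunctor B = mu(B) of V and natural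
  transformations x : B => B, tau : BB => BB, cap : BB => Id, cup : Id => BB satisfying the
  defining relations. Tensor product of endofunctors is composition, (F * G)(V) = F(G(V)),
  so for a natural transformation a we have (a * 1)_V = a_{BV} and (1 * a)_V = B(a_V).\<close>

record ('o, 'm) nbdata =
  Bo   :: "'o \<Rightarrow> 'o"
  Bm   :: "'m \<Rightarrow> 'm"
  xx   :: "'o \<Rightarrow> 'm"
  tau  :: "'o \<Rightarrow> 'm"
  cap  :: "'o \<Rightarrow> 'm"
  cup  :: "'o \<Rightarrow> 'm"

definition is_lin_endofunctor :: "('o, 'm, 'k::field) lincat \<Rightarrow> ('o \<Rightarrow> 'o) \<Rightarrow> ('m \<Rightarrow> 'm) \<Rightarrow> bool" where
  "is_lin_endofunctor C Fo Fm \<longleftrightarrow>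
    (\<forall>a b f. f \<in> Hom C a b \<longrightarrow> Fm f \<in> Hom C (Fo a) (Fo b)) \<and>
    (\<forall>a. Fm (idm C a) = idm C (Fo a)) \<and>
    (\<forall>a b c f g. f \<in> Hom C a b \<longrightarrow> g \<in> Hom C b c \<longrightarrow> Fm (cmp C g f) = cmp C (Fm g) (Fm f)) \<and>
    (\<forall>a b f g. f \<in> Hom C a b \<longrightarrow> g \<in> Hom C a b \<longrightarrow> Fm (madd C f g) = madd C (Fm f) (Fm g)) \<and>
    (\<forall>a b c f. f \<in> Hom C a b \<longrightarrow> Fm (msc C c f) = msc C c (Fm f))"

definition is_nb_module :: "('o, 'm, 'k::field) lincat \<Rightarrow> nat \<Rightarrow> ('o, 'm) nbdata \<Rightarrow> bool" where
  "is_nb_module C t M \<longleftrightarrow>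
    is_lincat C \<and> is_lin_endofunctor C (Bo M) (Bm M) \<and>
    \<comment> \<open>components\<close>
    (\<forall>V. xx M V \<in> Hom C (Bo M V) (Bo M V) \<and>
         tau M V \<in> Hom C (Bo M (Bo M V)) (Bo M (Bo M V)) \<and>
         cap M V \<in> Hom C (Bo M (Bo M V)) V \<and>
         cup M V \<in> Hom C V (Bo M (Bo M V))) \<and>
    \<comment> \<open>naturality\<close>
    (\<forall>a b f. f \<in> Hom C a b \<longrightarrow>
        cmp C (Bm M f) (xx M a) = cmp C (xx M b) (Bm M f) \<and>
        cmp C (Bm M (Bm M f)) (tau M a) = cmp C (tau M b) (Bm M (Bm M f)) \<and>
        cmp C f (cap M a) = cmp C (cap M b) (Bm M (Bm M f)) \<and>
        cmp C (Bm M (Bm M f)) (cup M a) = cmp C (cup M b) f) \<and>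
    \<comment> \<open>defining relations of NB_t, componentwise\<close>
    (\<forall>V. let B = Bo M; Bf = Bm M in
        cmp C (tau M V) (tau M V) = mzero C (B (B V)) (B (B V)) \<and>
        cmp C (tau M (B V)) (cmp C (Bf (tau M V)) (tau M (B V)))
          = cmp C (Bf (tau M V)) (cmp C (tau M (B V)) (Bf (tau M V))) \<and>
        cmp C (cap M V) (cup M V) = msc C (of_nat t) (idm C V) \<and>
        cmp C (cap M (B V)) (Bf (cup M V)) = idm C (B V) \<and>
        cmp C (Bf (cap M V)) (cup M (B V)) = idm C (B V) \<and>
        cmp C (cap M V) (tau M V) = mzero C (B (B V)) V \<and>
        cmp C (Bf (cap M V)) (tau M (B V)) = cmp C (cap M (B V)) (Bf (tau M V)) \<and>
        msub C (cmp C (xx M (B V)) (tau M V)) (cmp C (tau M V) (Bf (xx M V)))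
          = msub C (idm C (B (B V))) (cmp C (cup M V) (cap M V)) \<and>
        cmp C (cap M V) (Bf (xx M V)) = msc C (-1) (cmp C (cap M V) (xx M (B V))))"

definition special :: "('o, 'm, 'k::field) lincat \<Rightarrow> ('o, 'm) nbdata \<Rightarrow> 'o \<Rightarrow> bool" where
  "special C M L \<longleftrightarrow>
    Hom C L L = {msc C c (idm C L) | c. True} \<and> idm C L \<noteq> mzero C L L \<and>
    findim_hom C (Bo M L) (Bo M L)"

definition bubble :: "('o, 'm, 'k::field) lincat \<Rightarrow> ('o, 'm) nbdata \<Rightarrow> 'o \<Rightarrow> nat \<Rightarrow> 'k" where
  "bubble C M L r = (THE c. cmp C (cap M L) (cmp C (Bm M (mpow C (Bo M L) (xx M L) r)) (cup M L))
                           = msc C c (idm C L))"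

text \<open>O_L(u) as a formal power series in w = u^{-1}:
  (-1)^t (1 - 2 u sum_r u^{-r-1} b_r) = (-1)^t (1 - 2 sum_r b_r w^r).\<close>

definition O_L :: "('o, 'm, 'k::field) lincat \<Rightarrow> nat \<Rightarrow> ('o, 'm) nbdata \<Rightarrow> 'o \<Rightarrow> 'k fps" where
  "O_L C t M L = fps_const ((-1) ^ t) * (1 - 2 * Abs_fps (bubble C M L))"

definition m_L :: "('o, 'm, 'k::field) lincat \<Rightarrow> ('o, 'm) nbdata \<Rightarrow> 'o \<Rightarrow> 'k poly" where
  "m_L C M L = minpoly C (Bo M L) (xx M L)"

text \<open>For a polynomial m of degree d, m(u) = u^d (reflect_poly m)(u^{-1}); hence the rational
  function m(-u)/m(u), expanded in k[[u^{-1}]], is the fps quotient below.\<close>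

definition ratio_at_infty :: "'k::field poly \<Rightarrow> 'k fps" where
  "ratio_at_infty m = fps_of_poly (reflect_poly (pcompose m [:0, -1:])) / fps_of_poly (reflect_poly m)"

end

theory Submission
  imports Defs "Jordan_Normal_Form.Determinant"
begin

(* For an endomorphism g of BL let twist g = cap_BL o B(tau_L o Bg o cup_L), and let beta(g) be the
   scalar by which the bubble cap_L o Bg o cup_L acts on L. Bending the dot-sliding relation around
   with cup and cap gives twist(x g) = - twist(g) x - g + beta(g), while twist(1) = 0 because
   cap o tau = 0. Hence twist(x^n) = q_n(x) for explicit polynomials q_n of degree < n whose
   coefficients are signed bubbles b_r. Applying twist to m_L(x) = 0 produces a polynomial of degree
   < deg m_L annihilating x_L, which therefore vanishes; together with beta(x^s m_L(x)) = 0 these are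
   precisely the coefficient identities of (1 - 2 sum_r b_r u^-r) m_L(u) = m_L(-u). *)

section \<open>Linear categories\<close>

text \<open>Every morphism lies in exactly one hom-set, so source and target can be read off the
  morphism itself; this lets the simplifier discharge typing side conditions.\<close>

definition hom_arr :: "('o, 'm, 'k) lincat \<Rightarrow> 'm \<Rightarrow> bool" where
  "hom_arr C f \<longleftrightarrow> (\<exists>a b. f \<in> Hom C a b)"

definition hom_src :: "('o, 'm, 'k) lincat \<Rightarrow> 'm \<Rightarrow> 'o" where
  "hom_src C f = (THE a. \<exists>b. f \<in> Hom C a b)"

definition hom_trg :: "('o, 'm, 'k) lincat \<Rightarrow> 'm \<Rightarrow> 'o" where
  "hom_trg C f = (THE b. \<exists>a. f \<in> Hom C a b)"

locale lin_cat =
  fixes C :: "('o, 'm, 'k::field) lincat"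
  assumes Hom_unique: "\<And>a b c d f. f \<in> Hom C a b \<Longrightarrow> f \<in> Hom C c d \<Longrightarrow> a = c \<and> b = d"
    and idm_in_Hom: "\<And>a. idm C a \<in> Hom C a a"
    and cmp_in_Hom: "\<And>a b c f g. f \<in> Hom C a b \<Longrightarrow> g \<in> Hom C b c \<Longrightarrow> cmp C g f \<in> Hom C a c"
    and cmp_assoc_Hom: "\<And>a b c d f g h. f \<in> Hom C a b \<Longrightarrow> g \<in> Hom C b c \<Longrightarrow> h \<in> Hom C c d \<Longrightarrow>
        cmp C h (cmp C g f) = cmp C (cmp C h g) f"
    and cmp_idm_Hom: "\<And>a b f. f \<in> Hom C a b \<Longrightarrow> cmp C f (idm C a) = f \<and> cmp C (idm C b) f = f"
    and mzero_in_Hom: "\<And>a b. mzero C a b \<in> Hom C a b"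
    and madd_in_Hom: "\<And>a b f g. f \<in> Hom C a b \<Longrightarrow> g \<in> Hom C a b \<Longrightarrow> madd C f g \<in> Hom C a b"
    and msc_in_Hom: "\<And>a b c f. f \<in> Hom C a b \<Longrightarrow> msc C c f \<in> Hom C a b"
    and madd_assoc_Hom: "\<And>a b f g h. f \<in> Hom C a b \<Longrightarrow> g \<in> Hom C a b \<Longrightarrow> h \<in> Hom C a b \<Longrightarrow>
        madd C (madd C f g) h = madd C f (madd C g h)"
    and madd_commute_Hom: "\<And>a b f g. f \<in> Hom C a b \<Longrightarrow> g \<in> Hom C a b \<Longrightarrow> madd C f g = madd C g f"
    and madd_mzero_Hom: "\<And>a b f. f \<in> Hom C a b \<Longrightarrow> madd C f (mzero C a b) = f"
    and madd_inverse_Hom: "\<And>a b f. f \<in> Hom C a b \<Longrightarrow> \<exists>g \<in> Hom C a b. madd C f g = mzero C a b"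
    and msc_one_Hom: "\<And>a b f. f \<in> Hom C a b \<Longrightarrow> msc C 1 f = f"
    and msc_msc_Hom: "\<And>a b c d f. f \<in> Hom C a b \<Longrightarrow> msc C c (msc C d f) = msc C (c * d) f"
    and msc_add_left_Hom: "\<And>a b c d f. f \<in> Hom C a b \<Longrightarrow> msc C (c + d) f = madd C (msc C c f) (msc C d f)"
    and msc_madd_Hom: "\<And>a b c f g. f \<in> Hom C a b \<Longrightarrow> g \<in> Hom C a b \<Longrightarrow>
        msc C c (madd C f g) = madd C (msc C c f) (msc C c g)"
    and cmp_madd_right_Hom: "\<And>a b c f1 f2 g. f1 \<in> Hom C a b \<Longrightarrow> f2 \<in> Hom C a b \<Longrightarrow> g \<in> Hom C b c \<Longrightarrow>
        cmp C g (madd C f1 f2) = madd C (cmp C g f1) (cmp C g f2)"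
    and cmp_madd_left_Hom: "\<And>a b c f g1 g2. f \<in> Hom C a b \<Longrightarrow> g1 \<in> Hom C b c \<Longrightarrow> g2 \<in> Hom C b c \<Longrightarrow>
        cmp C (madd C g1 g2) f = madd C (cmp C g1 f) (cmp C g2 f)"
    and cmp_msc_Hom: "\<And>a b c k f g. f \<in> Hom C a b \<Longrightarrow> g \<in> Hom C b c \<Longrightarrow>
        cmp C g (msc C k f) = msc C k (cmp C g f) \<and> cmp C (msc C k g) f = msc C k (cmp C g f)"

lemma lin_cat_iff_is_lincat: "lin_cat C \<longleftrightarrow> is_lincat C"
  unfolding lin_cat_def is_lincat_def by (simp only: conj_assoc)

context lin_cat
begin

abbreviation "arr \<equiv> hom_arr C"
abbreviation "src \<equiv> hom_src C"
abbreviation "trg \<equiv> hom_trg C"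

lemma in_Hom_iff: "f \<in> Hom C a b \<longleftrightarrow> arr f \<and> src f = a \<and> trg f = b"
proof
  assume f: "f \<in> Hom C a b"
  then show "arr f \<and> src f = a \<and> trg f = b"
    unfolding hom_arr_def hom_src_def hom_trg_def using Hom_unique by blast
next
  assume f: "arr f \<and> src f = a \<and> trg f = b"
  then obtain a' b' where "f \<in> Hom C a' b'" unfolding hom_arr_def by blast
  moreover from this have "src f = a'" "trg f = b'"
    unfolding hom_src_def hom_trg_def using Hom_unique by blast+
  ultimately show "f \<in> Hom C a b" using f by simp
qed

lemma arr_in_Hom: "arr f \<Longrightarrow> f \<in> Hom C (src f) (trg f)"
  using in_Hom_iff by blast

lemma idm_simps [simp]: "arr (idm C a)" "src (idm C a) = a" "trg (idm C a) = a"
  using idm_in_Hom in_Hom_iff by blast+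

lemma cmp_simps [simp]:
  assumes "arr f" "arr g" "src g = trg f"
  shows "arr (cmp C g f)" "src (cmp C g f) = src f" "trg (cmp C g f) = trg g"
proof -
  have "cmp C g f \<in> Hom C (src f) (trg g)"
    using cmp_in_Hom assms arr_in_Hom by metis
  then show "arr (cmp C g f)" "src (cmp C g f) = src f" "trg (cmp C g f) = trg g"
    using in_Hom_iff by blast+
qed

lemma cmp_assoc [simp]:
  "arr f \<Longrightarrow> arr g \<Longrightarrow> arr h \<Longrightarrow> src g = trg f \<Longrightarrow> src h = trg g \<Longrightarrow>
    cmp C (cmp C h g) f = cmp C h (cmp C g f)"
  using cmp_assoc_Hom arr_in_Hom by metis

lemma cmp_assoc_rewrite:
  "cmp C h g = k \<Longrightarrow> arr f \<Longrightarrow> arr g \<Longrightarrow> arr h \<Longrightarrow> src g = trg f \<Longrightarrow> src h = trg g \<Longrightarrow>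
    cmp C h (cmp C g f) = cmp C k f"
  using cmp_assoc[of f g h] by simp

lemma cmp_idm_left [simp]: "arr f \<Longrightarrow> trg f = b \<Longrightarrow> cmp C (idm C b) f = f"
  using cmp_idm_Hom arr_in_Hom by blast

lemma cmp_idm_right [simp]: "arr f \<Longrightarrow> src f = a \<Longrightarrow> cmp C f (idm C a) = f"
  using cmp_idm_Hom arr_in_Hom by blast

lemma mzero_simps [simp]: "arr (mzero C a b)" "src (mzero C a b) = a" "trg (mzero C a b) = b"
  using mzero_in_Hom in_Hom_iff by blast+

lemma madd_simps [simp]:
  assumes "arr f" "arr g" "src g = src f" "trg g = trg f"
  shows "arr (madd C f g)" "src (madd C f g) = src f" "trg (madd C f g) = trg f"
proof -
  have "madd C f g \<in> Hom C (src f) (trg f)"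
    using madd_in_Hom assms arr_in_Hom by metis
  then show "arr (madd C f g)" "src (madd C f g) = src f" "trg (madd C f g) = trg f"
    using in_Hom_iff by blast+
qed

lemma msc_simps [simp]:
  assumes "arr f"
  shows "arr (msc C c f)" "src (msc C c f) = src f" "trg (msc C c f) = trg f"
proof -
  have "msc C c f \<in> Hom C (src f) (trg f)"
    using msc_in_Hom assms arr_in_Hom by metis
  then show "arr (msc C c f)" "src (msc C c f) = src f" "trg (msc C c f) = trg f"
    using in_Hom_iff by blast+
qed

lemma madd_assoc [simp]:
  "arr f \<Longrightarrow> arr g \<Longrightarrow> arr h \<Longrightarrow> src g = src f \<Longrightarrow> trg g = trg f \<Longrightarrow> src h = src f \<Longrightarrow>
    trg h = trg f \<Longrightarrow> madd C (madd C f g) h = madd C f (madd C g h)"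
  using madd_assoc_Hom arr_in_Hom by metis

lemma madd_commute:
  "arr f \<Longrightarrow> arr g \<Longrightarrow> src g = src f \<Longrightarrow> trg g = trg f \<Longrightarrow> madd C f g = madd C g f"
  using madd_commute_Hom arr_in_Hom by metis

lemma madd_mzero [simp]: "arr f \<Longrightarrow> src f = a \<Longrightarrow> trg f = b \<Longrightarrow> madd C f (mzero C a b) = f"
  using madd_mzero_Hom arr_in_Hom by blast

lemma mzero_madd [simp]: "arr f \<Longrightarrow> src f = a \<Longrightarrow> trg f = b \<Longrightarrow> madd C (mzero C a b) f = f"
  using madd_commute[of f "mzero C a b"] by simp

lemma madd_inverse_exists:
  "arr f \<Longrightarrow> \<exists>g. arr g \<and> src g = src f \<and> trg g = trg f \<and> madd C f g = mzero C (src f) (trg f)"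
  using madd_inverse_Hom arr_in_Hom in_Hom_iff by metis

lemma msc_one [simp]: "arr f \<Longrightarrow> msc C 1 f = f"
  using msc_one_Hom arr_in_Hom by blast

lemma msc_msc [simp]: "arr f \<Longrightarrow> msc C c (msc C d f) = msc C (c * d) f"
  using msc_msc_Hom arr_in_Hom by blast

lemma msc_add_left: "arr f \<Longrightarrow> msc C (c + d) f = madd C (msc C c f) (msc C d f)"
  using msc_add_left_Hom arr_in_Hom by blast

lemma madd_msc_msc [simp]: "arr f \<Longrightarrow> madd C (msc C c f) (msc C d f) = msc C (c + d) f"
  using msc_add_left by simp

lemma msc_madd [simp]:
  "arr f \<Longrightarrow> arr g \<Longrightarrow> src g = src f \<Longrightarrow> trg g = trg f \<Longrightarrow>
    msc C c (madd C f g) = madd C (msc C c f) (msc C c g)"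
  using msc_madd_Hom arr_in_Hom by metis

lemma cmp_madd_right [simp]:
  "arr f1 \<Longrightarrow> arr f2 \<Longrightarrow> arr g \<Longrightarrow> src f2 = src f1 \<Longrightarrow> trg f2 = trg f1 \<Longrightarrow> src g = trg f1 \<Longrightarrow>
    cmp C g (madd C f1 f2) = madd C (cmp C g f1) (cmp C g f2)"
  using cmp_madd_right_Hom arr_in_Hom by metis

lemma cmp_madd_left [simp]:
  "arr f \<Longrightarrow> arr g1 \<Longrightarrow> arr g2 \<Longrightarrow> src g2 = src g1 \<Longrightarrow> trg g2 = trg g1 \<Longrightarrow> src g1 = trg f \<Longrightarrow>
    cmp C (madd C g1 g2) f = madd C (cmp C g1 f) (cmp C g2 f)"
  using cmp_madd_left_Hom arr_in_Hom by metis

lemma cmp_msc_right [simp]: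
  "arr f \<Longrightarrow> arr g \<Longrightarrow> src g = trg f \<Longrightarrow> cmp C g (msc C c f) = msc C c (cmp C g f)"
  using cmp_msc_Hom arr_in_Hom by metis

lemma cmp_msc_left [simp]:
  "arr f \<Longrightarrow> arr g \<Longrightarrow> src g = trg f \<Longrightarrow> cmp C (msc C c g) f = msc C c (cmp C g f)"
  using cmp_msc_Hom arr_in_Hom by metis

lemma msc_zero [simp]: "arr f \<Longrightarrow> src f = a \<Longrightarrow> trg f = b \<Longrightarrow> msc C 0 f = mzero C a b"
proof -
  assume f: "arr f" "src f = a" "trg f = b"
  obtain g where g: "arr g" "src g = a" "trg g = b" "madd C (msc C 0 f) g = mzero C a b"
    using madd_inverse_exists[of "msc C 0 f"] f by auto
  have "mzero C a b = madd C (msc C 0 f) g" using g by simp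
  also have "msc C 0 f = madd C (msc C 0 f) (msc C 0 f)"
    using msc_add_left[OF f(1), of 0 0] by simp
  also have "madd C (madd C (msc C 0 f) (msc C 0 f)) g = madd C (msc C 0 f) (madd C (msc C 0 f) g)"
    by (rule madd_assoc) (simp_all add: f g)
  also have "\<dots> = msc C 0 f" using f g by simp
  finally show ?thesis by (rule sym)
qed

lemma msc_mzero [simp]: "msc C c (mzero C a b) = mzero C a b"
  using msc_msc[of "mzero C a b" c 0] by simp

lemma cmp_mzero_right [simp]: "arr g \<Longrightarrow> src g = b \<Longrightarrow> cmp C g (mzero C a b) = mzero C a (trg g)"
  using cmp_msc_right[of "mzero C a b" g 0] by simp

lemma cmp_mzero_left [simp]: "arr f \<Longrightarrow> trg f = b \<Longrightarrow> cmp C (mzero C b c) f = mzero C (src f) c"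
  using cmp_msc_left[of f "mzero C b c" 0] by simp

lemma madd_msc_neg: "arr f \<Longrightarrow> madd C f (msc C (-1) f) = mzero C (src f) (trg f)"
  using madd_msc_msc[of f 1 "-1"] by simp

lemma eq_if_madd_msc_neg_eq_mzero:
  assumes "arr f" "arr g" "src g = src f" "trg g = trg f"
    and "madd C f (msc C (-1) g) = mzero C (src f) (trg f)"
  shows "f = g"
proof -
  have "f = madd C f (mzero C (src f) (trg f))" using assms by simp
  also have "mzero C (src f) (trg f) = madd C (msc C (-1) g) g"
    using madd_msc_neg[of g] madd_commute[of g "msc C (-1) g"] assms by simp
  also have "madd C f (madd C (msc C (-1) g) g) = madd C (madd C f (msc C (-1) g)) g"
    by (rule madd_assoc[symmetric]) (simp_all add: assms)
  also have "\<dots> = madd C (mzero C (src f) (trg f)) g" by (simp only: assms(5))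
  also have "\<dots> = g" using assms by simp
  finally show ?thesis .
qed

lemma madd_eq_mzero_imp_neg:
  assumes "arr f" "arr g" "src g = src f" "trg g = trg f" "madd C f g = mzero C (src f) (trg f)"
  shows "g = msc C (-1) f"
proof -
  have "madd C g (msc C (-1) (msc C (-1) f)) = madd C f g"
    using assms madd_commute[of g f] by simp
  also have "\<dots> = mzero C (src g) (trg g)" using assms by simp
  finally have diff: "madd C g (msc C (-1) (msc C (-1) f)) = mzero C (src g) (trg g)" .
  show ?thesis by (rule eq_if_madd_msc_neg_eq_mzero[OF _ _ _ _ diff]) (simp_all add: assms)
qed

lemma msc_idm_inj:
  assumes "idm C a \<noteq> mzero C a a" "msc C c (idm C a) = msc C d (idm C a)"
  shows "c = d"
proof (rule ccontr)
  assume "c \<noteq> d"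
  have "msc C (c - d) (idm C a) = madd C (msc C c (idm C a)) (msc C (- d) (idm C a))"
    by simp
  also have "\<dots> = mzero C a a" using assms(2) by simp
  finally have "msc C (inverse (c - d)) (msc C (c - d) (idm C a)) = mzero C a a" by simp
  then show False using \<open>c \<noteq> d\<close> assms(1) by simp
qed

lemma madd_solve:
  assumes "arr f" "arr g" "src g = src f" "trg g = trg f" "madd C f (msc C (-1) g) = h"
  shows "g = madd C f (msc C (-1) h)"
proof -
  have "madd C f (msc C (-1) h) = madd C f (msc C (-1) (madd C f (msc C (-1) g)))"
    using assms(5) by simp
  also have "\<dots> = madd C f (madd C (msc C (-1) f) g)"
    using assms(1-4) by simp
  also have "\<dots> = madd C (madd C f (msc C (-1) f)) g" using assms by simp
  also have "\<dots> = g" using assms madd_msc_neg[of f] by simp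
  finally show ?thesis by (rule sym)
qed


lemma madd_left_commute:
  "arr f \<Longrightarrow> arr g \<Longrightarrow> arr h \<Longrightarrow> src g = src f \<Longrightarrow> trg g = trg f \<Longrightarrow> src h = src f \<Longrightarrow>
    trg h = trg f \<Longrightarrow> madd C f (madd C g h) = madd C g (madd C f h)"
  using madd_assoc[of f g h] madd_assoc[of g f h] madd_commute[of f g] by simp

lemma madd_madd_swap:
  assumes "arr f" "arr g" "arr h" "arr k" "src g = src f" "trg g = trg f" "src h = src f"
    "trg h = trg f" "src k = src f" "trg k = trg f"
  shows "madd C (madd C f g) (madd C h k) = madd C (madd C f h) (madd C g k)"
  using assms madd_left_commute[of g h k] by simp

section \<open>Polynomials evaluated at an endomorphism\<close>

fun msum :: "'o \<Rightarrow> 'o \<Rightarrow> (nat \<Rightarrow> 'm) \<Rightarrow> nat \<Rightarrow> 'm" where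
  "msum a b f 0 = mzero C a b"
| "msum a b f (Suc n) = madd C (f 0) (msum a b (\<lambda>i. f (Suc i)) n)"

lemma msum_simps:
  assumes "\<And>i. i < n \<Longrightarrow> arr (f i) \<and> src (f i) = a \<and> trg (f i) = b"
  shows "arr (msum a b f n) \<and> src (msum a b f n) = a \<and> trg (msum a b f n) = b"
  using assms by (induction n arbitrary: f) auto

lemma foldr_madd_upt_eq_msum:
  "foldr (\<lambda>i acc. madd C (f i) acc) [0..<n] (mzero C a b) = msum a b f n"
proof (induction n arbitrary: f)
  case 0
  then show ?case by simp
next
  case (Suc n)
  have "[0..<Suc n] = 0 # map Suc [0..<n]" by (simp add: upt_conv_Cons map_Suc_upt)
  then show ?case using Suc[of "\<lambda>i. f (Suc i)"] by (simp add: foldr_map o_def)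
qed

lemma msum_mzero: "(\<And>i. f i = mzero C a b) \<Longrightarrow> msum a b f n = mzero C a b"
  by (induction n arbitrary: f) simp_all

lemma msum_eq_if_tail_mzero:
  assumes "\<And>i. i \<ge> n \<Longrightarrow> f i = mzero C a b" "n \<le> N"
  shows "msum a b f N = msum a b f n"
  using assms
proof (induction n arbitrary: f N)
  case 0
  have "msum a b f N = mzero C a b" by (rule msum_mzero) (use 0 in simp)
  then show ?case by simp
next
  case (Suc n)
  then obtain N' where N: "N = Suc N'" by (cases N) auto
  have "msum a b (\<lambda>i. f (Suc i)) N' = msum a b (\<lambda>i. f (Suc i)) n"
    using Suc.prems N by (intro Suc.IH) simp_all
  then show ?case using N by simp
qed

lemma cmp_msum:
  assumes "\<And>i. i < n \<Longrightarrow> arr (f i) \<and> src (f i) = a \<and> trg (f i) = b" "arr g" "src g = b"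
  shows "cmp C g (msum a b f n) = msum a (trg g) (\<lambda>i. cmp C g (f i)) n"
  using assms
proof (induction n arbitrary: f)
  case 0
  then show ?case by simp
next
  case (Suc n)
  have "arr (msum a b (\<lambda>i. f (Suc i)) n) \<and> src (msum a b (\<lambda>i. f (Suc i)) n) = a \<and>
      trg (msum a b (\<lambda>i. f (Suc i)) n) = b"
    using Suc.prems by (intro msum_simps) auto
  moreover have "cmp C g (msum a b (\<lambda>i. f (Suc i)) n) = msum a (trg g) (\<lambda>i. cmp C g (f (Suc i))) n"
    using Suc.prems by (intro Suc.IH) auto
  ultimately show ?case using Suc.prems by simp
qed

lemma mpow_simps [simp]:
  "arr X \<Longrightarrow> src X = a \<Longrightarrow> trg X = a \<Longrightarrow>
    arr (mpow C a X n) \<and> src (mpow C a X n) = a \<and> trg (mpow C a X n) = a"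
  by (induction n) auto

lemma peval_eq_msum:
  assumes "arr X" "src X = a" "trg X = a" "degree p < N"
  shows "peval C a p X = msum a a (\<lambda>i. msc C (coeff p i) (mpow C a X i)) N"
proof -
  have "peval C a p X = msum a a (\<lambda>i. msc C (coeff p i) (mpow C a X i)) (Suc (degree p))"
    unfolding peval_def lincomb_def foldr_madd_upt_eq_msum[symmetric] by (simp add: foldr_map o_def)
  also have "\<dots> = msum a a (\<lambda>i. msc C (coeff p i) (mpow C a X i)) N"
    using assms by (intro msum_eq_if_tail_mzero[symmetric]) (simp_all add: coeff_eq_0)
  finally show ?thesis .
qed

end

locale lin_cat_endo = lin_cat C for C :: "('o, 'm, 'k::field) lincat" +
  fixes a :: 'o and X :: 'm
  assumes endo: "arr X" "src X = a" "trg X = a"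
begin

abbreviation "pev p \<equiv> peval C a p X"

lemma endo_simps [simp]: "arr X" "src X = a" "trg X = a"
  using endo by auto

lemma peval_pCons: "pev (pCons c p) = madd C (msc C c (idm C a)) (cmp C X (pev p))"
proof -
  let ?N = "Suc (Suc (degree p))"
  have "pev (pCons c p) = msum a a (\<lambda>i. msc C (coeff (pCons c p) i) (mpow C a X i)) ?N"
    using degree_pCons_le[of c p] by (intro peval_eq_msum) simp_all
  also have "\<dots> = madd C (msc C c (idm C a))
      (msum a a (\<lambda>i. cmp C X (msc C (coeff p i) (mpow C a X i))) (Suc (degree p)))"
    by simp
  also have "msum a a (\<lambda>i. cmp C X (msc C (coeff p i) (mpow C a X i))) (Suc (degree p))
      = cmp C X (msum a a (\<lambda>i. msc C (coeff p i) (mpow C a X i)) (Suc (degree p)))"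
    using cmp_msum[of "Suc (degree p)" "\<lambda>i. msc C (coeff p i) (mpow C a X i)" a a X] by simp
  also have "msum a a (\<lambda>i. msc C (coeff p i) (mpow C a X i)) (Suc (degree p)) = pev p"
    by (intro peval_eq_msum[symmetric]) simp_all
  finally show ?thesis .
qed

lemma peval_0 [simp]: "pev 0 = mzero C a a"
  using peval_eq_msum[of X a 0 1] by simp

lemma peval_simps [simp]: "arr (pev p)" "src (pev p) = a" "trg (pev p) = a"
proof -
  have "arr (pev p) \<and> src (pev p) = a \<and> trg (pev p) = a"
    by (induction p) (simp_all add: peval_pCons)
  then show "arr (pev p)" "src (pev p) = a" "trg (pev p) = a" by auto
qed

lemma peval_const [simp]: "pev [:c:] = msc C c (idm C a)"
  using peval_pCons[of c 0] by simp

lemma peval_pCons_0: "pev (pCons 0 p) = cmp C X (pev p)"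
  using peval_pCons[of 0 p] by simp

lemma peval_add: "pev (p + q) = madd C (pev p) (pev q)"
proof (induction p arbitrary: q)
  case 0
  then show ?case by simp
next
  case (pCons c p)
  obtain d q' where q: "q = pCons d q'" by (cases q)
  have "pev (pCons c p + q) = madd C (msc C (c + d) (idm C a)) (cmp C X (pev (p + q')))"
    using q peval_pCons by simp
  also have "\<dots> = madd C (madd C (msc C c (idm C a)) (msc C d (idm C a)))
                       (madd C (cmp C X (pev p)) (cmp C X (pev q')))"
    using pCons.IH[of q'] by simp
  also have "\<dots> = madd C (madd C (msc C c (idm C a)) (cmp C X (pev p)))
                       (madd C (msc C d (idm C a)) (cmp C X (pev q')))"
    by (rule madd_madd_swap) auto
  also have "\<dots> = madd C (pev (pCons c p)) (pev q)" using q peval_pCons by simp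
  finally show ?case .
qed

lemma peval_smult: "pev (Polynomial.smult c p) = msc C c (pev p)"
  by (induction p) (simp_all add: peval_pCons)

lemma peval_mult: "pev (p * q) = cmp C (pev p) (pev q)"
proof (induction p)
  case 0
  then show ?case by simp
next
  case (pCons c p)
  have "pev (pCons c p * q) = madd C (msc C c (pev q)) (cmp C X (pev (p * q)))"
    by (simp add: peval_add peval_smult peval_pCons_0)
  also have "\<dots> = cmp C (pev (pCons c p)) (pev q)" using pCons.IH by (simp add: peval_pCons)
  finally show ?case .
qed

lemma peval_commute: "cmp C (pev p) X = cmp C X (pev p)"
proof -
  have "cmp C X (pev p) = pev (p * [:0, 1:])" by (simp add: peval_pCons_0)
  also have "\<dots> = cmp C (pev p) (pev [:0, 1:])" by (rule peval_mult)
  also have "pev [:0, 1:] = X" by (simp add: peval_pCons_0)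
  finally show ?thesis by simp
qed

lemma peval_monom: "pev (monom c n) = msc C c (mpow C a X n)"
  by (induction n) (simp_all add: monom_0 monom_Suc peval_pCons_0)

lemma peval_minus: "pev (- p) = msc C (-1) (pev p)"
  using peval_smult[of "-1" p] by simp

lemma peval_diff: "pev (p - q) = madd C (pev p) (msc C (-1) (pev q))"
  using peval_add[of p "-q"] peval_minus by simp

end

context lin_cat
begin

lemma lincomb_Cons: "lincomb C a b ((c, f) # ps) = madd C (msc C c f) (lincomb C a b ps)"
  by (simp add: lincomb_def)

lemma lincomb_simps:
  assumes "set fs \<subseteq> Hom C a b"
  shows "arr (lincomb C a b (zip cs fs)) \<and> src (lincomb C a b (zip cs fs)) = a \<and>
    trg (lincomb C a b (zip cs fs)) = b"
  using assms
proof (induction fs arbitrary: cs)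
  case Nil
  then show ?case by (simp add: lincomb_def)
next
  case (Cons f fs)
  then show ?case by (cases cs) (auto simp: lincomb_def in_Hom_iff)
qed

lemma lincomb_add:
  assumes "length xs = length fs" "set fs \<subseteq> Hom C a b"
  shows "lincomb C a b (zip (map (\<lambda>r. u r + v r) xs) fs)
    = madd C (lincomb C a b (zip (map u xs) fs)) (lincomb C a b (zip (map v xs) fs))"
  using assms
proof (induction fs arbitrary: xs)
  case Nil
  then show ?case by (simp add: lincomb_def)
next
  case (Cons f fs)
  then obtain y ys where xs: "xs = y # ys" by (cases xs) auto
  have f: "arr f" "src f = a" "trg f = b" using Cons.prems in_Hom_iff by auto
  have IH: "lincomb C a b (zip (map (\<lambda>r. u r + v r) ys) fs)
      = madd C (lincomb C a b (zip (map u ys) fs)) (lincomb C a b (zip (map v ys) fs))"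
    using Cons xs by simp
  have "lincomb C a b (zip (map (\<lambda>r. u r + v r) xs) (f # fs))
      = madd C (madd C (msc C (u y) f) (msc C (v y) f))
          (madd C (lincomb C a b (zip (map u ys) fs)) (lincomb C a b (zip (map v ys) fs)))"
    using xs IH f by (simp add: lincomb_Cons)
  also have "\<dots> = madd C (madd C (msc C (u y) f) (lincomb C a b (zip (map u ys) fs)))
      (madd C (msc C (v y) f) (lincomb C a b (zip (map v ys) fs)))"
    using f lincomb_simps[of fs a b] Cons.prems by (intro madd_madd_swap) auto
  also have "\<dots> = madd C (lincomb C a b (zip (map u xs) (f # fs)))
      (lincomb C a b (zip (map v xs) (f # fs)))"
    using xs by (simp add: lincomb_Cons)
  finally show ?case .
qed

lemma lincomb_scale:
  assumes "length xs = length fs" "set fs \<subseteq> Hom C a b"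
  shows "lincomb C a b (zip (map (\<lambda>r. c * u r) xs) fs) = msc C c (lincomb C a b (zip (map u xs) fs))"
  using assms
proof (induction fs arbitrary: xs)
  case Nil
  then show ?case by (simp add: lincomb_def)
next
  case (Cons f fs)
  then obtain y ys where xs: "xs = y # ys" by (cases xs) auto
  then show ?case
    using Cons lincomb_simps[of fs a b "map u ys"] by (simp add: lincomb_Cons in_Hom_iff)
qed

lemma lincomb_zero:
  assumes "set fs \<subseteq> Hom C a b"
  shows "lincomb C a b (zip (map (\<lambda>r. 0) xs) fs) = mzero C a b"
  using assms
proof (induction fs arbitrary: xs)
  case Nil
  then show ?case by (simp add: lincomb_def)
next
  case (Cons f fs)
  then show ?case by (cases xs) (simp_all add: lincomb_def in_Hom_iff)
qed

end

lemma exists_nontrivial_linear_relation: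
  fixes w :: "nat \<Rightarrow> nat \<Rightarrow> 'k::field"
  shows "\<exists>v. (\<exists>i<Suc N. v i \<noteq> 0) \<and> (\<forall>r<N. (\<Sum>i<Suc N. v i * w i r) = 0)"
proof -
  define A :: "'k mat" where
    "A = mat\<^sub>r (Suc N) (Suc N) (\<lambda>r. if r = N then 0\<^sub>v (Suc N) else vec (Suc N) (\<lambda>i. w i r))"
  have A: "A \<in> carrier_mat (Suc N) (Suc N)" unfolding A_def by simp
  have "det A = 0" unfolding A_def by (rule det_row_0) auto
  then obtain v where v: "v \<in> carrier_vec (Suc N)" "v \<noteq> 0\<^sub>v (Suc N)" "A *\<^sub>v v = 0\<^sub>v (Suc N)"
    using det_0_iff_vec_prod_zero_field[OF A] by blast
  have "\<exists>i<Suc N. v $ i \<noteq> 0"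
    using v(1,2) by (metis carrier_vecD eq_vecI index_zero_vec)
  moreover have "(\<Sum>i<Suc N. v $ i * w i r) = 0" if "r < N" for r
  proof -
    have "(A *\<^sub>v v) $ r = (\<Sum>i<Suc N. v $ i * w i r)"
      using that v(1) unfolding A_def by (simp add: scalar_prod_def lessThan_atLeast0 mult.commute)
    then show ?thesis using v(3) that by simp
  qed
  ultimately show ?thesis by blast
qed

context lin_cat_endo
begin

lemma peval_sum_monom_lincomb:
  assumes fs: "set fs \<subseteq> Hom C a a" "length fs = N"
    and coords: "\<And>i. mpow C a X i = lincomb C a a (zip (map (w i) [0..<N]) fs)"
    and "finite I"
  shows "pev (\<Sum>i\<in>I. monom (v i) i) = lincomb C a a (zip (map (\<lambda>r. \<Sum>i\<in>I. v i * w i r) [0..<N]) fs)"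
  using \<open>finite I\<close>
proof (induction I rule: finite_induct)
  case empty
  then show ?case using lincomb_zero[OF fs(1), of "[0..<N]"] by simp
next
  case (insert j I)
  have "pev (\<Sum>i\<in>insert j I. monom (v i) i) = madd C (pev (monom (v j) j)) (pev (\<Sum>i\<in>I. monom (v i) i))"
    using insert by (simp add: peval_add)
  also have "pev (monom (v j) j) = lincomb C a a (zip (map (\<lambda>r. v j * w j r) [0..<N]) fs)"
    using lincomb_scale[OF _ fs(1), of "[0..<N]" "v j" "w j"] fs(2) by (simp add: peval_monom coords)
  finally show ?case
    using insert lincomb_add[OF _ fs(1), of "[0..<N]" "\<lambda>r. v j * w j r" "\<lambda>r. \<Sum>i\<in>I. v i * w i r"] fs(2)
    by simp
qed

lemma annihilating_poly_exists:
  assumes "findim_hom C a a"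
  shows "\<exists>p. p \<noteq> 0 \<and> pev p = mzero C a a"
proof -
  obtain fs where fs: "set fs \<subseteq> Hom C a a"
    and span: "\<And>f. f \<in> Hom C a a \<Longrightarrow> \<exists>cs. length cs = length fs \<and> f = lincomb C a a (zip cs fs)"
    using assms unfolding findim_hom_def by blast
  define N where "N = length fs"
  have "\<forall>i. \<exists>cs. length cs = N \<and> mpow C a X i = lincomb C a a (zip cs fs)"
    using span in_Hom_iff N_def by simp
  then obtain cs where cs: "\<And>i. length (cs i) = N \<and> mpow C a X i = lincomb C a a (zip (cs i) fs)"
    by metis
  define w where "w i r = cs i ! r" for i r
  have coords: "mpow C a X i = lincomb C a a (zip (map (w i) [0..<N]) fs)" for i
    using cs[of i] map_nth[of "cs i"] unfolding w_def by simp
  obtain v where v: "\<exists>i<Suc N. v i \<noteq> 0" "\<And>r. r < N \<Longrightarrow> (\<Sum>i<Suc N. v i * w i r) = 0"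
    using exists_nontrivial_linear_relation[of N w] by blast
  define p where "p = (\<Sum>i<Suc N. monom (v i) i)"
  have "coeff p i = (if i < Suc N then v i else 0)" for i
    unfolding p_def by (simp add: coeff_sum coeff_monom)
  then have "p \<noteq> 0" using v(1) by (metis coeff_0)
  moreover have "pev p = mzero C a a"
  proof -
    have "pev p = lincomb C a a (zip (map (\<lambda>r. \<Sum>i<Suc N. v i * w i r) [0..<N]) fs)"
      unfolding p_def using fs N_def coords by (intro peval_sum_monom_lincomb) auto
    also have "map (\<lambda>r. \<Sum>i<Suc N. v i * w i r) [0..<N] = map (\<lambda>r. 0) [0..<N]"
      using v(2) by simp
    finally show ?thesis using lincomb_zero[OF fs] by simp
  qed
  ultimately show ?thesis by blast
qed

lemma monic_annihilators_of_least_degree_eq: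
  assumes "lead_coeff p = 1" "lead_coeff q = 1" "degree p = degree q"
    and "pev p = mzero C a a" "pev q = mzero C a a"
    and least: "\<And>r. r \<noteq> 0 \<Longrightarrow> pev r = mzero C a a \<Longrightarrow> degree p \<le> degree r"
  shows "p = q"
proof (rule ccontr)
  assume "p \<noteq> q"
  then have "p - q \<noteq> 0" by simp
  moreover have "pev (p - q) = mzero C a a" using assms by (simp add: peval_diff)
  ultimately have "degree p \<le> degree (p - q)" using least by blast
  moreover have "degree (p - q) \<le> degree p" using assms by (simp add: degree_diff_le)
  moreover have "coeff (p - q) (degree p) = 0" using assms by simp
  ultimately show False using \<open>p - q \<noteq> 0\<close> by (metis le_antisym leading_coeff_0_iff)
qed

lemma minpoly_spec:
  assumes "findim_hom C a a"
  shows "lead_coeff (minpoly C a X) = 1" "pev (minpoly C a X) = mzero C a a"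
    "\<And>q. q \<noteq> 0 \<Longrightarrow> pev q = mzero C a a \<Longrightarrow> degree (minpoly C a X) \<le> degree q"
proof -
  let ?least = "\<lambda>p. \<forall>q. q \<noteq> 0 \<and> pev q = mzero C a a \<longrightarrow> degree p \<le> degree q"
  define d where "d = (LEAST n. \<exists>p. p \<noteq> 0 \<and> pev p = mzero C a a \<and> degree p = n)"
  obtain p where p: "p \<noteq> 0" "pev p = mzero C a a" "degree p = d"
    using LeastI_ex[of "\<lambda>n. \<exists>p. p \<noteq> 0 \<and> pev p = mzero C a a \<and> degree p = n"]
      annihilating_poly_exists[OF assms] unfolding d_def by blast
  have "d \<le> degree q" if "q \<noteq> 0" "pev q = mzero C a a" for q
    unfolding d_def by (rule Least_le) (use that in blast)
  then have least: "?least p" using p by blast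
  define m where "m = Polynomial.smult (inverse (lead_coeff p)) p"
  have m: "lead_coeff m = 1" "pev m = mzero C a a" "?least m"
    unfolding m_def using p least by (auto simp: peval_smult)
  have "minpoly C a X = m"
    unfolding minpoly_def
  proof (rule the_equality)
    fix q assume q: "lead_coeff q = 1 \<and> pev q = mzero C a a \<and> ?least q"
    then have "degree q = degree m" using m by (metis le_antisym leading_coeff_0_iff zero_neq_one)
    then show "q = m" using q m by (intro monic_annihilators_of_least_degree_eq) auto
  qed (use m in blast)
  then show "lead_coeff (minpoly C a X) = 1" "pev (minpoly C a X) = mzero C a a"
    "\<And>q. q \<noteq> 0 \<Longrightarrow> pev q = mzero C a a \<Longrightarrow> degree (minpoly C a X) \<le> degree q"
    using m by auto
qed

end

section \<open>A coefficient identity for power series\<close>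

lemma sum_mult_reflected_low:
  fixes b c :: "nat \<Rightarrow> 'k::field"
  assumes "k < d"
    and A: "\<And>a. (\<Sum>j\<le>d. c j * (if a < j then (-1)^a * b (j - 1 - a)
                 - (if a = j - 1 \<and> odd j then 1 else 0) else 0)) = 0"
  shows "(\<Sum>i=0..k. b i * (if k - i > d then 0 else c (d - (k - i))))
    = (if odd (d - k) then c (d - k) else 0)"
proof -
  define a where "a = d - k - 1"
  have d: "d = a + 1 + k" using \<open>k < d\<close> a_def by simp
  let ?F = "\<lambda>j. c j * (if a < j then (-1)^a * b (j - 1 - a)
                 - (if a = j - 1 \<and> odd j then 1 else 0) else 0)"
  have split: "{..d} = {..a} \<union> {a+1..d}" using d by auto
  have "(\<Sum>j\<le>d. ?F j) = (\<Sum>j\<in>{..a}. ?F j) + (\<Sum>j\<in>{a+1..d}. ?F j)"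
    unfolding split by (rule sum.union_disjoint) auto
  also have "(\<Sum>j\<in>{..a}. ?F j) = 0" by (rule sum.neutral) auto
  also have "(\<Sum>j\<in>{a+1..d}. ?F j) = (\<Sum>i=0..k. ?F (i + (a + 1)))"
    using sum.shift_bounds_cl_nat_ivl[of ?F 0 "a+1" k] d by (simp add: add.commute)
  also have "\<dots> = (\<Sum>i=0..k. (-1)^a * (c (a + 1 + i) * b i)
      - (if i = 0 \<and> odd (a + 1) then c (a + 1) else 0))"
    by (rule sum.cong) (auto simp: algebra_simps)
  also have "\<dots> = (-1)^a * (\<Sum>i=0..k. c (a + 1 + i) * b i)
      - (\<Sum>i=0..k. (if i = 0 \<and> odd (a + 1) then c (a + 1) else 0))"
    by (simp add: sum_subtractf sum_distrib_left)
  also have "(\<Sum>i=0..k. (if i = 0 \<and> odd (a + 1) then c (a + 1) else 0))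
      = (if odd (a + 1) then c (a + 1) else 0)"
    by (simp add: sum.delta)
  finally have e: "(-1)^a * (\<Sum>i=0..k. c (a + 1 + i) * b i) = (if odd (a + 1) then c (a + 1) else 0)"
    using A[of a] by simp
  have lhs: "(\<Sum>i=0..k. b i * (if k - i > d then 0 else c (d - (k - i))))
      = (\<Sum>i=0..k. c (a + 1 + i) * b i)"
    by (rule sum.cong) (auto simp: d algebra_simps)
  have dk: "d - k = a + 1" using d by simp
  show ?thesis
  proof (cases "odd (a + 1)")
    case True
    then have "(-1::'k)^a = 1" by simp
    then have "(\<Sum>i=0..k. c (a + 1 + i) * b i) = c (a + 1)" using e True by simp
    then show ?thesis using lhs dk True by simp
  next
    case False
    then have "(\<Sum>i=0..k. c (a + 1 + i) * b i) = 0" using e by simp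
    then show ?thesis using lhs dk False by simp
  qed
qed

lemma sum_mult_reflected_high:
  fixes b c :: "nat \<Rightarrow> 'k::field"
  assumes "d \<le> k" and T: "\<And>s. (\<Sum>j\<le>d. c j * b (j + s)) = 0"
  shows "(\<Sum>i=0..k. b i * (if k - i > d then 0 else c (d - (k - i)))) = 0"
proof -
  define s where "s = k - d"
  have k: "k = s + d" using \<open>d \<le> k\<close> s_def by simp
  let ?G = "\<lambda>i. b i * (if k - i > d then 0 else c (d - (k - i)))"
  have split: "{0..k} = {0..<s} \<union> {s..s+d}" using k by auto
  have "(\<Sum>i=0..k. ?G i) = (\<Sum>i\<in>{0..<s}. ?G i) + (\<Sum>i\<in>{s..s+d}. ?G i)"
    unfolding split by (rule sum.union_disjoint) auto
  also have "(\<Sum>i\<in>{0..<s}. ?G i) = 0" by (rule sum.neutral) (auto simp: k)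
  also have "(\<Sum>i\<in>{s..s+d}. ?G i) = (\<Sum>j=0..d. ?G (j + s))"
    using sum.shift_bounds_cl_nat_ivl[of ?G 0 s d] by (simp add: add.commute)
  also have "\<dots> = (\<Sum>j\<le>d. c j * b (j + s))"
    unfolding atMost_atLeast0 by (rule sum.cong) (auto simp: k algebra_simps)
  finally show ?thesis using T by simp
qed

lemma coeff_pcompose_minus_X: "coeff (pcompose p [:0, -1:]) i = (-1)^i * coeff (p :: 'k::field poly) i"
proof (induction p arbitrary: i)
  case 0
  then show ?case by simp
next
  case (pCons a p)
  have "pcompose (pCons a p) [:0, -1:] = pCons a (- pcompose p [:0, -1:])"
    by (simp add: pcompose_pCons)
  then show ?case using pCons by (cases i) (auto simp: coeff_pCons)
qed

text \<open>The hypothesis is the coefficientwise form of \<open>(1 - 2 \<Sum> b\<^sub>r w\<^sup>r) \<cdot> rev m(w) = rev m(-w)\<close>.\<close>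

lemma ratio_at_infty_eq_if_coeffs:
  fixes m :: "'k::field poly" and b :: "nat \<Rightarrow> 'k"
  assumes monic: "lead_coeff m = 1"
    and coeffs: "\<And>k. (\<Sum>i=0..k. b i * (if k - i > degree m then 0 else coeff m (degree m - (k - i))))
      = (if k \<le> degree m \<and> odd (degree m - k) then coeff m (degree m - k) else 0)"
  shows "1 - 2 * Abs_fps b = ratio_at_infty m"
proof -
  define d where "d = degree m"
  define D where "D = fps_of_poly (reflect_poly m)"
  define A where "A = fps_of_poly (reflect_poly (pcompose m [:0, -1:]))"
  have "degree (pcompose m [:0, -1:]) = d" unfolding d_def by (simp add: degree_pcompose)
  then have A: "A $ j = (if j > d then 0 else (-1)^(d - j) * coeff m (d - j))" for j
    unfolding A_def by (simp add: coeff_reflect_poly coeff_pcompose_minus_X)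
  have D: "D $ j = (if j > d then 0 else coeff m (d - j))" for j
    unfolding D_def d_def by (simp add: coeff_reflect_poly)
  have D0: "D $ 0 \<noteq> 0" using D[of 0] monic d_def by simp
  have "(1 - 2 * Abs_fps b) * D = A"
  proof (rule fps_ext)
    fix k
    have c: "(1 - 2 * Abs_fps b) $ i = (if i = 0 then 1 else 0) - 2 * b i" for i
      by (simp add: numeral_fps_const)
    have "((1 - 2 * Abs_fps b) * D) $ k = (\<Sum>i=0..k. ((if i = 0 then 1 else 0) - 2 * b i) * D $ (k - i))"
      unfolding fps_mult_nth c ..
    also have "\<dots> = (\<Sum>i=0..k. (if i = 0 then D $ (k - i) else 0) - 2 * (b i * D $ (k - i)))"
      by (rule sum.cong) (auto simp: algebra_simps)
    also have "\<dots> = (\<Sum>i=0..k. (if i = 0 then D $ (k - i) else 0)) - 2 * (\<Sum>i=0..k. b i * D $ (k - i))"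
      by (simp only: sum_subtractf sum_distrib_left)
    also have "(\<Sum>i=0..k. (if i = 0 then D $ (k - i) else 0)) = D $ k" by (simp add: sum.delta)
    also have "(\<Sum>i=0..k. b i * D $ (k - i)) = (if k \<le> d \<and> odd (d - k) then coeff m (d - k) else 0)"
      using coeffs[of k] unfolding D d_def by simp
    finally show "((1 - 2 * Abs_fps b) * D) $ k = A $ k"
      unfolding A D by (auto simp: minus_one_power_iff)
  qed
  then have "A * inverse D = (1 - 2 * Abs_fps b) * (D * inverse D)" by (simp add: mult.assoc)
  also have "D * inverse D = 1" by (rule inverse_mult_eq_1'[OF D0])
  finally show ?thesis
    unfolding ratio_at_infty_def A_def D_def fps_divide_unit[OF D0[unfolded D_def]] by simp
qed

section \<open>Strict module categories over the nil-Brauer category\<close>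

locale nb_module =
  fixes C :: "('o, 'm, 'k::field) lincat" and t :: nat and M :: "('o, 'm) nbdata"
  assumes nb_module: "is_nb_module C t M"
begin

sublocale lin_cat C
  using nb_module by (simp add: is_nb_module_def lin_cat_iff_is_lincat)

text \<open>The cup is the unit \<open>\<eta>\<close> and the cap the counit \<open>\<epsilon>\<close> of the self-adjunction of \<open>B\<close>.\<close>

abbreviation "B \<equiv> Bo M"
abbreviation "Bf \<equiv> Bm M"
abbreviation "x \<equiv> xx M"
abbreviation "\<tau> \<equiv> tau M"
abbreviation "\<epsilon> \<equiv> cap M"
abbreviation "\<eta> \<equiv> cup M"

lemmas endofunctor_axioms =
  nb_module[unfolded is_nb_module_def, THEN conjunct2, THEN conjunct1, unfolded is_lin_endofunctor_def]
lemmas component_axioms =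
  nb_module[unfolded is_nb_module_def, THEN conjunct2, THEN conjunct2, THEN conjunct1]
lemmas naturality_axioms =
  nb_module[unfolded is_nb_module_def, THEN conjunct2, THEN conjunct2, THEN conjunct2, THEN conjunct1]
lemmas relation_axioms =
  nb_module[unfolded is_nb_module_def, THEN conjunct2, THEN conjunct2, THEN conjunct2, THEN conjunct2,
    unfolded Let_def]

lemma Bf_simps [simp]:
  assumes "arr f"
  shows "arr (Bf f)" "src (Bf f) = B (src f)" "trg (Bf f) = B (trg f)"
proof -
  have "Bf f \<in> Hom C (B (src f)) (B (trg f))"
    using endofunctor_axioms arr_in_Hom[OF assms] by blast
  then show "arr (Bf f)" "src (Bf f) = B (src f)" "trg (Bf f) = B (trg f)"
    using in_Hom_iff by blast+
qed

lemma Bf_idm [simp]: "Bf (idm C a) = idm C (B a)"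
  using endofunctor_axioms by blast

lemma Bf_cmp [simp]: "arr f \<Longrightarrow> arr g \<Longrightarrow> src g = trg f \<Longrightarrow> Bf (cmp C g f) = cmp C (Bf g) (Bf f)"
  using endofunctor_axioms arr_in_Hom by metis

lemma Bf_madd [simp]:
  "arr f \<Longrightarrow> arr g \<Longrightarrow> src g = src f \<Longrightarrow> trg g = trg f \<Longrightarrow> Bf (madd C f g) = madd C (Bf f) (Bf g)"
  using endofunctor_axioms arr_in_Hom by metis

lemma Bf_msc [simp]: "arr f \<Longrightarrow> Bf (msc C c f) = msc C c (Bf f)"
  using endofunctor_axioms arr_in_Hom by metis

lemma Bf_mzero [simp]: "Bf (mzero C a b) = mzero C (B a) (B b)"
  using Bf_msc[of "mzero C a b" 0] by simp

lemma x_simps [simp]: "arr (x V)" "src (x V) = B V" "trg (x V) = B V"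
  using component_axioms in_Hom_iff by blast+

lemma tau_simps [simp]: "arr (\<tau> V)" "src (\<tau> V) = B (B V)" "trg (\<tau> V) = B (B V)"
  using component_axioms in_Hom_iff by blast+

lemma cap_simps [simp]: "arr (\<epsilon> V)" "src (\<epsilon> V) = B (B V)" "trg (\<epsilon> V) = V"
  using component_axioms in_Hom_iff by blast+

lemma cup_simps [simp]: "arr (\<eta> V)" "src (\<eta> V) = V" "trg (\<eta> V) = B (B V)"
  using component_axioms in_Hom_iff by blast+

lemma x_natural: "arr f \<Longrightarrow> cmp C (Bf f) (x (src f)) = cmp C (x (trg f)) (Bf f)"
  using naturality_axioms arr_in_Hom by blast

lemma tau_natural: "arr f \<Longrightarrow> cmp C (Bf (Bf f)) (\<tau> (src f)) = cmp C (\<tau> (trg f)) (Bf (Bf f))"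
  using naturality_axioms arr_in_Hom by blast

lemma cap_natural: "arr f \<Longrightarrow> cmp C f (\<epsilon> (src f)) = cmp C (\<epsilon> (trg f)) (Bf (Bf f))"
  using naturality_axioms arr_in_Hom by blast

lemma cup_natural: "arr f \<Longrightarrow> cmp C (Bf (Bf f)) (\<eta> (src f)) = cmp C (\<eta> (trg f)) f"
  using naturality_axioms arr_in_Hom by blast

lemma zigzag_cap_Bf_cup: "cmp C (\<epsilon> (B V)) (Bf (\<eta> V)) = idm C (B V)"
  using relation_axioms by blast

lemma zigzag_Bf_cap_cup: "cmp C (Bf (\<epsilon> V)) (\<eta> (B V)) = idm C (B V)"
  using relation_axioms by blast

lemma cap_tau: "cmp C (\<epsilon> V) (\<tau> V) = mzero C (B (B V)) V"
  using relation_axioms by blast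

lemma cap_tau_slide: "cmp C (Bf (\<epsilon> V)) (\<tau> (B V)) = cmp C (\<epsilon> (B V)) (Bf (\<tau> V))"
  using relation_axioms by blast

lemma dot_slide:
  "msub C (cmp C (x (B V)) (\<tau> V)) (cmp C (\<tau> V) (Bf (x V)))
    = msub C (idm C (B (B V))) (cmp C (\<eta> V) (\<epsilon> V))"
  using relation_axioms by blast

lemma cap_dot_slide: "cmp C (\<epsilon> V) (Bf (x V)) = msc C (-1) (cmp C (\<epsilon> V) (x (B V)))"
  using relation_axioms by blast

lemma eq_mzero_if_cap_Bf_eq_mzero:
  assumes "arr p" "src p = U" "trg p = B W" "cmp C (\<epsilon> W) (Bf p) = mzero C (B U) W"
  shows "p = mzero C U (B W)"
proof -
  have "p = cmp C (cmp C (Bf (\<epsilon> W)) (\<eta> (B W))) p" using assms by (simp add: zigzag_Bf_cap_cup)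
  also have "\<dots> = cmp C (Bf (\<epsilon> W)) (cmp C (\<eta> (B W)) p)" using assms by simp
  also have "cmp C (\<eta> (B W)) p = cmp C (Bf (Bf p)) (\<eta> U)" using cup_natural[of p] assms by simp
  also have "cmp C (Bf (\<epsilon> W)) (cmp C (Bf (Bf p)) (\<eta> U)) = cmp C (Bf (cmp C (\<epsilon> W) (Bf p))) (\<eta> U)"
    using assms(1-3) by simp
  also have "\<dots> = mzero C U (B W)" by (simp only: assms(4)) simp
  finally show ?thesis .
qed

lemma Bf_cap_Bf_cup_cancel:
  assumes "arr p" "src p = V" "trg p = B (B V)"
  shows "cmp C (Bf (cmp C (\<epsilon> (B V)) (Bf p))) (\<eta> V) = p"
proof -
  have "cmp C (Bf (cmp C (\<epsilon> (B V)) (Bf p))) (\<eta> V) = cmp C (Bf (\<epsilon> (B V))) (cmp C (Bf (Bf p)) (\<eta> V))"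
    using assms by simp
  also have "cmp C (Bf (Bf p)) (\<eta> V) = cmp C (\<eta> (B (B V))) p" using cup_natural[of p] assms by simp
  also have "cmp C (Bf (\<epsilon> (B V))) (cmp C (\<eta> (B (B V))) p) = p"
    using assms by (simp add: cmp_assoc_rewrite[OF zigzag_Bf_cap_cup])
  finally show ?thesis .
qed

lemma cap_Bf_Bf_cup_cancel:
  assumes "arr g" "src g = B V" "trg g = B V"
  shows "cmp C (\<epsilon> (B V)) (Bf (cmp C (Bf g) (\<eta> V))) = g"
proof -
  have "cmp C (\<epsilon> (B V)) (Bf (cmp C (Bf g) (\<eta> V))) = cmp C (cmp C (\<epsilon> (B V)) (Bf (Bf g))) (Bf (\<eta> V))"
    using assms by simp
  also have "cmp C (\<epsilon> (B V)) (Bf (Bf g)) = cmp C g (\<epsilon> (B V))" using cap_natural[of g] assms by simp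
  also have "cmp C (cmp C g (\<epsilon> (B V))) (Bf (\<eta> V)) = g" using assms by (simp add: zigzag_cap_Bf_cup)
  finally show ?thesis .
qed

lemma x_cup: "cmp C (x (B V)) (\<eta> V) = msc C (-1) (cmp C (Bf (x V)) (\<eta> V))"
proof -
  let ?p = "madd C (cmp C (x (B V)) (\<eta> V)) (cmp C (Bf (x V)) (\<eta> V))"
  have outer: "cmp C (\<epsilon> (B V)) (cmp C (Bf (x (B V))) (Bf (\<eta> V))) = msc C (-1) (x V)"
  proof -
    have "cmp C (\<epsilon> (B V)) (cmp C (Bf (x (B V))) (Bf (\<eta> V)))
        = cmp C (msc C (-1) (cmp C (\<epsilon> (B V)) (x (B (B V))))) (Bf (\<eta> V))"
      by (simp add: cmp_assoc_rewrite[OF cap_dot_slide[of "B V"]])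
    also have "\<dots> = msc C (-1) (cmp C (\<epsilon> (B V)) (cmp C (x (B (B V))) (Bf (\<eta> V))))" by simp
    also have "cmp C (x (B (B V))) (Bf (\<eta> V)) = cmp C (Bf (\<eta> V)) (x V)"
      using x_natural[of "\<eta> V"] by simp
    also have "cmp C (\<epsilon> (B V)) (cmp C (Bf (\<eta> V)) (x V)) = x V"
      by (simp add: cmp_assoc_rewrite[OF zigzag_cap_Bf_cup])
    finally show ?thesis .
  qed
  have "cmp C (\<epsilon> (B V)) (Bf (Bf (x V))) = cmp C (x V) (\<epsilon> (B V))"
    using cap_natural[of "x V"] by simp
  then have inner: "cmp C (\<epsilon> (B V)) (cmp C (Bf (Bf (x V))) (Bf (\<eta> V))) = x V"
    using cmp_assoc_rewrite by (simp add: zigzag_cap_Bf_cup)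
  have "cmp C (\<epsilon> (B V)) (Bf ?p) = madd C (msc C (-1) (x V)) (x V)"
    using outer inner by simp
  also have "\<dots> = mzero C (B V) (B V)"
    using madd_msc_neg[of "x V"] madd_commute[of "x V" "msc C (-1) (x V)"] by simp
  finally have "?p = mzero C V (B (B V))" by (intro eq_mzero_if_cap_Bf_eq_mzero) simp_all
  then show ?thesis using madd_eq_mzero_imp_neg[of "cmp C (Bf (x V)) (\<eta> V)" "cmp C (x (B V)) (\<eta> V)"]
    madd_commute[of "cmp C (Bf (x V)) (\<eta> V)" "cmp C (x (B V)) (\<eta> V)"] by simp
qed

text \<open>The rotated form of the relation \<open>\<epsilon> \<circ> \<tau> = 0\<close>.\<close>

lemma tau_cup: "cmp C (\<tau> V) (\<eta> V) = mzero C V (B (B V))"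
proof -
  let ?D = "cmp C (Bf (\<epsilon> V)) (cmp C (\<tau> (B V)) (Bf (\<eta> V)))"
  have "cmp C (\<epsilon> V) (Bf ?D)
      = cmp C (cmp C (\<epsilon> V) (Bf (Bf (\<epsilon> V)))) (cmp C (Bf (\<tau> (B V))) (Bf (Bf (\<eta> V))))"
    by simp
  also have "cmp C (\<epsilon> V) (Bf (Bf (\<epsilon> V))) = cmp C (\<epsilon> V) (\<epsilon> (B (B V)))"
    using cap_natural[of "\<epsilon> V"] by simp
  also have "cmp C (cmp C (\<epsilon> V) (\<epsilon> (B (B V)))) (cmp C (Bf (\<tau> (B V))) (Bf (Bf (\<eta> V))))
     = cmp C (\<epsilon> V) (cmp C (cmp C (\<epsilon> (B (B V))) (Bf (\<tau> (B V)))) (Bf (Bf (\<eta> V))))" by simp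
  also have "cmp C (\<epsilon> (B (B V))) (Bf (\<tau> (B V))) = cmp C (Bf (\<epsilon> (B V))) (\<tau> (B (B V)))"
    using cap_tau_slide[of "B V"] by simp
  also have "cmp C (cmp C (Bf (\<epsilon> (B V))) (\<tau> (B (B V)))) (Bf (Bf (\<eta> V)))
      = cmp C (Bf (\<epsilon> (B V))) (cmp C (\<tau> (B (B V))) (Bf (Bf (\<eta> V))))" by simp
  also have "cmp C (\<tau> (B (B V))) (Bf (Bf (\<eta> V))) = cmp C (Bf (Bf (\<eta> V))) (\<tau> V)"
    using tau_natural[of "\<eta> V"] by simp
  also have "cmp C (Bf (\<epsilon> (B V))) (cmp C (Bf (Bf (\<eta> V))) (\<tau> V)) = \<tau> V"
    by (simp add: cmp_assoc_rewrite[OF zigzag_cap_Bf_cup[THEN arg_cong[where f=Bf], simplified]])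
  also have "cmp C (\<epsilon> V) (\<tau> V) = mzero C (B (B V)) V" by (rule cap_tau)
  finally have "?D = mzero C (B V) (B V)" by (intro eq_mzero_if_cap_Bf_eq_mzero) simp_all
  moreover have "cmp C (\<epsilon> (B V)) (Bf (cmp C (\<tau> V) (\<eta> V))) = ?D"
    by (simp add: cmp_assoc_rewrite[OF cap_tau_slide[symmetric]])
  ultimately show ?thesis by (intro eq_mzero_if_cap_Bf_eq_mzero) simp_all
qed

definition bubble_of :: "'o \<Rightarrow> 'm \<Rightarrow> 'm" where
  "bubble_of V g = cmp C (\<epsilon> V) (cmp C (Bf g) (\<eta> V))"

lemma bubble_of_simps [simp]:
  "arr g \<Longrightarrow> src g = B V \<Longrightarrow> trg g = B V \<Longrightarrow>
    arr (bubble_of V g) \<and> src (bubble_of V g) = V \<and> trg (bubble_of V g) = V"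
  unfolding bubble_of_def by simp

definition twist :: "'o \<Rightarrow> 'm \<Rightarrow> 'm" where
  "twist V g = cmp C (\<epsilon> (B V)) (Bf (cmp C (\<tau> V) (cmp C (Bf g) (\<eta> V))))"

lemma twist_simps [simp]:
  "arr g \<Longrightarrow> src g = B V \<Longrightarrow> trg g = B V \<Longrightarrow>
    arr (twist V g) \<and> src (twist V g) = B V \<and> trg (twist V g) = B V"
  unfolding twist_def by simp

lemma twist_madd:
  "arr g \<Longrightarrow> src g = B V \<Longrightarrow> trg g = B V \<Longrightarrow> arr h \<Longrightarrow> src h = B V \<Longrightarrow> trg h = B V \<Longrightarrow>
    twist V (madd C g h) = madd C (twist V g) (twist V h)"
  unfolding twist_def by simp

lemma twist_msc:
  "arr g \<Longrightarrow> src g = B V \<Longrightarrow> trg g = B V \<Longrightarrow> twist V (msc C c g) = msc C c (twist V g)"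
  unfolding twist_def by simp

lemma twist_mzero: "twist V (mzero C (B V) (B V)) = mzero C (B V) (B V)"
  unfolding twist_def by simp

lemma twist_idm: "twist V (idm C (B V)) = mzero C (B V) (B V)"
  unfolding twist_def by (simp add: tau_cup)

lemma cap_Bf_msub_cmp:
  assumes "arr f" "arr g" "arr h" "src f = B (B V)" "trg f = B (B V)" "src g = B (B V)"
    "trg g = B (B V)" "src h = V" "trg h = B (B V)"
  shows "cmp C (\<epsilon> (B V)) (Bf (cmp C (msub C f g) h))
     = madd C (cmp C (\<epsilon> (B V)) (Bf (cmp C f h))) (msc C (-1) (cmp C (\<epsilon> (B V)) (Bf (cmp C g h))))"
  using assms by (simp add: msub_def)

lemma cap_Bf_x_tau_cup:
  assumes g: "arr g" "src g = B V" "trg g = B V"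
  shows "cmp C (\<epsilon> (B V)) (Bf (cmp C (cmp C (x (B V)) (\<tau> V)) (cmp C (Bf g) (\<eta> V))))
    = msc C (-1) (cmp C (twist V g) (x V))"
proof -
  let ?h = "cmp C (Bf g) (\<eta> V)"
  have twist_g: "arr (twist V g)" "src (twist V g) = B V" "trg (twist V g) = B V"
    using twist_simps[OF g] by auto
  have "cmp C (\<tau> V) ?h = cmp C (Bf (twist V g)) (\<eta> V)"
    using Bf_cap_Bf_cup_cancel[of "cmp C (\<tau> V) ?h" V] g unfolding twist_def by simp
  then have "cmp C (cmp C (x (B V)) (\<tau> V)) ?h = cmp C (x (B V)) (cmp C (Bf (twist V g)) (\<eta> V))"
    using g by simp
  also have "\<dots> = cmp C (cmp C (x (B V)) (Bf (twist V g))) (\<eta> V)" using twist_g by simp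
  also have "cmp C (x (B V)) (Bf (twist V g)) = cmp C (Bf (twist V g)) (x (B V))"
    using x_natural[of "twist V g"] twist_g by simp
  also have "cmp C (cmp C (Bf (twist V g)) (x (B V))) (\<eta> V)
      = cmp C (Bf (twist V g)) (cmp C (x (B V)) (\<eta> V))"
    using twist_g by simp
  also have "\<dots> = msc C (-1) (cmp C (Bf (cmp C (twist V g) (x V))) (\<eta> V))"
    using twist_g by (simp add: x_cup)
  finally have "cmp C (\<epsilon> (B V)) (Bf (cmp C (cmp C (x (B V)) (\<tau> V)) ?h))
      = msc C (-1) (cmp C (\<epsilon> (B V)) (Bf (cmp C (Bf (cmp C (twist V g) (x V))) (\<eta> V))))"
    using twist_g by simp
  also have "cmp C (\<epsilon> (B V)) (Bf (cmp C (Bf (cmp C (twist V g) (x V))) (\<eta> V))) = cmp C (twist V g) (x V)"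
    by (rule cap_Bf_Bf_cup_cancel) (simp_all add: twist_g)
  finally show ?thesis .
qed

text \<open>The dot-sliding relation, precomposed with \<open>B g \<circ> \<eta>\<close> and bent back with the cap.\<close>

lemma twist_dot_relation:
  assumes g: "arr g" "src g = B V" "trg g = B V"
  shows "madd C (msc C (-1) (cmp C (twist V g) (x V))) (msc C (-1) (twist V (cmp C (x V) g)))
        = madd C g (msc C (-1) (Bf (bubble_of V g)))"
proof -
  let ?mate = "\<lambda>p. cmp C (\<epsilon> (B V)) (Bf p)"
  let ?h = "cmp C (Bf g) (\<eta> V)"
  have x_tau: "?mate (cmp C (cmp C (x (B V)) (\<tau> V)) ?h) = msc C (-1) (cmp C (twist V g) (x V))"
    using cap_Bf_x_tau_cup[OF g] .
  have tau_x: "?mate (cmp C (cmp C (\<tau> V) (Bf (x V))) ?h) = twist V (cmp C (x V) g)"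
    unfolding twist_def using g by simp
  have idm: "?mate (cmp C (idm C (B (B V))) ?h) = g"
    using cap_Bf_Bf_cup_cancel[OF g] g by simp
  have "?mate (cmp C (cmp C (\<eta> V) (\<epsilon> V)) ?h) = cmp C (cmp C (\<epsilon> (B V)) (Bf (\<eta> V))) (Bf (cmp C (\<epsilon> V) ?h))"
    using g by simp
  then have cup_cap: "?mate (cmp C (cmp C (\<eta> V) (\<epsilon> V)) ?h) = Bf (bubble_of V g)"
    unfolding bubble_of_def using g by (simp add: zigzag_cap_Bf_cup)
  have "madd C (?mate (cmp C (cmp C (x (B V)) (\<tau> V)) ?h)) (msc C (-1) (?mate (cmp C (cmp C (\<tau> V) (Bf (x V))) ?h)))
      = ?mate (cmp C (msub C (cmp C (x (B V)) (\<tau> V)) (cmp C (\<tau> V) (Bf (x V)))) ?h)"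
    by (rule cap_Bf_msub_cmp[symmetric]) (simp_all add: g)
  also have "\<dots> = ?mate (cmp C (msub C (idm C (B (B V))) (cmp C (\<eta> V) (\<epsilon> V))) ?h)"
    by (simp only: dot_slide)
  also have "\<dots> = madd C (?mate (cmp C (idm C (B (B V))) ?h)) (msc C (-1) (?mate (cmp C (cmp C (\<eta> V) (\<epsilon> V)) ?h)))"
    by (rule cap_Bf_msub_cmp) (simp_all add: g)
  finally show ?thesis unfolding x_tau tau_x idm cup_cap by (simp add: g)
qed

end

section \<open>Special objects\<close>

locale special_object = nb_module C t M for C :: "('o, 'm, 'k::field) lincat" and t M +
  fixes L :: 'o
  assumes special: "special C M L"

sublocale special_object \<subseteq> xL: lin_cat_endo C "Bo M L" "xx M L"
  by unfold_locales simp_all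

context special_object
begin

abbreviation "\<beta> \<equiv> bubble C M L"
abbreviation "mL \<equiv> m_L C M L"

lemma End_L_eq_scalars: "Hom C L L = {msc C c (idm C L) | c. True}"
  using special unfolding special_def by blast

lemma idm_L_neq_mzero: "idm C L \<noteq> mzero C L L"
  using special unfolding special_def by blast

lemma findim_End_BL: "findim_hom C (B L) (B L)"
  using special unfolding special_def by blast

definition scalar :: "'m \<Rightarrow> 'k" where
  "scalar f = (THE c. f = msc C c (idm C L))"

lemma scalar_msc_idm [simp]: "scalar (msc C c (idm C L)) = c"
  unfolding scalar_def by (rule the_equality) (auto dest: msc_idm_inj[OF idm_L_neq_mzero])

lemma eq_msc_scalar:
  assumes "arr f" "src f = L" "trg f = L"
  shows "f = msc C (scalar f) (idm C L)"
proof -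
  have "f \<in> Hom C L L" using assms in_Hom_iff by blast
  then obtain c where "f = msc C c (idm C L)" using End_L_eq_scalars by blast
  then show ?thesis by simp
qed

lemma scalar_mzero [simp]: "scalar (mzero C L L) = 0"
  using scalar_msc_idm[of 0] by simp

lemma scalar_madd:
  assumes "arr f" "src f = L" "trg f = L" "arr g" "src g = L" "trg g = L"
  shows "scalar (madd C f g) = scalar f + scalar g"
proof -
  have "madd C f g = madd C (msc C (scalar f) (idm C L)) (msc C (scalar g) (idm C L))"
    using eq_msc_scalar[of f] eq_msc_scalar[of g] assms by simp
  then show ?thesis by simp
qed

lemma scalar_msc:
  assumes "arr f" "src f = L" "trg f = L"
  shows "scalar (msc C c f) = c * scalar f"
proof -
  have "msc C c f = msc C (c * scalar f) (idm C L)"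
    using eq_msc_scalar[OF assms] by (metis msc_msc idm_simps(1))
  then show ?thesis by simp
qed

lemma bubble_eq_scalar: "\<beta> r = scalar (bubble_of L (mpow C (B L) (x L) r))"
  unfolding bubble_def scalar_def bubble_of_def by (simp add: eq_commute)

lemma minpoly_x_L:
  "lead_coeff mL = 1" "xL.pev mL = mzero C (B L) (B L)"
  "\<And>q. q \<noteq> 0 \<Longrightarrow> xL.pev q = mzero C (B L) (B L) \<Longrightarrow> degree mL \<le> degree q"
  using xL.minpoly_spec[OF findim_End_BL] unfolding m_L_def by auto

definition poly_bubble :: "'k poly \<Rightarrow> 'k" where
  "poly_bubble p = scalar (bubble_of L (xL.pev p))"

lemma poly_bubble_add: "poly_bubble (p + q) = poly_bubble p + poly_bubble q"
  unfolding poly_bubble_def bubble_of_def by (simp add: xL.peval_add scalar_madd)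

lemma poly_bubble_0 [simp]: "poly_bubble 0 = 0"
  unfolding poly_bubble_def bubble_of_def by simp

lemma poly_bubble_monom: "poly_bubble (monom c n) = c * \<beta> n"
  unfolding poly_bubble_def bubble_eq_scalar by (simp add: xL.peval_monom bubble_of_def scalar_msc)

lemma poly_bubble_sum: "finite I \<Longrightarrow> poly_bubble (\<Sum>i\<in>I. f i) = (\<Sum>i\<in>I. poly_bubble (f i))"
  by (induction I rule: finite_induct) (simp_all add: poly_bubble_add)

lemma minpoly_bubble_relation: "(\<Sum>j\<le>degree mL. coeff mL j * \<beta> (j + s)) = 0"
proof -
  have "monom 1 s * mL = monom 1 s * (\<Sum>j\<le>degree mL. monom (coeff mL j) j)"
    by (simp add: poly_as_sum_of_monoms)
  also have "\<dots> = (\<Sum>j\<le>degree mL. monom (coeff mL j) (j + s))"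
    by (simp add: sum_distrib_left mult_monom add.commute)
  finally have "monom 1 s * mL = (\<Sum>j\<le>degree mL. monom (coeff mL j) (j + s))" .
  moreover have "poly_bubble (monom 1 s * mL) = 0"
    unfolding poly_bubble_def bubble_of_def by (simp add: xL.peval_mult minpoly_x_L(2))
  ultimately show ?thesis by (simp add: poly_bubble_sum poly_bubble_monom)
qed

lemma twist_x_cmp:
  assumes g: "arr g" "src g = B L" "trg g = B L"
  shows "twist L (cmp C (x L) g) = madd C (msc C (-1) (cmp C (twist L g) (x L)))
    (msc C (-1) (madd C g (msc C (-1) (msc C (scalar (bubble_of L g)) (idm C (B L))))))"
proof -
  have "bubble_of L g = msc C (scalar (bubble_of L g)) (idm C L)"
    using g by (intro eq_msc_scalar) simp_all
  then have "Bf (bubble_of L g) = msc C (scalar (bubble_of L g)) (idm C (B L))"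
    by (metis Bf_idm Bf_msc idm_simps(1))
  then have rel: "madd C (msc C (-1) (cmp C (twist L g) (x L))) (msc C (-1) (twist L (cmp C (x L) g)))
      = madd C g (msc C (-1) (msc C (scalar (bubble_of L g)) (idm C (B L))))"
    using twist_dot_relation[OF g] by simp
  show ?thesis by (rule madd_solve[OF _ _ _ _ rel]) (simp_all add: g)
qed

text \<open>By \<open>twist_x_cmp\<close>, \<open>twist (x\<^sup>n\<^sup>+\<^sup>1) = -twist (x\<^sup>n) x - x\<^sup>n + \<beta> n\<close>.\<close>

primrec twist_poly :: "nat \<Rightarrow> 'k poly" where
  "twist_poly 0 = 0"
| "twist_poly (Suc n) = - pCons 0 (twist_poly n) - (monom 1 n - [:\<beta> n:])"

lemma twist_mpow: "twist L (mpow C (B L) (x L) n) = xL.pev (twist_poly n)"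
proof (induction n)
  case 0
  then show ?case by (simp add: twist_idm)
next
  case (Suc n)
  let ?g = "mpow C (B L) (x L) n"
  have g: "arr ?g" "src ?g = B L" "trg ?g = B L" using mpow_simps[of "x L" "B L" n] by auto
  have "xL.pev (twist_poly (Suc n)) = madd C (msc C (-1) (cmp C (x L) (xL.pev (twist_poly n))))
      (msc C (-1) (madd C ?g (msc C (-1) (msc C (\<beta> n) (idm C (B L))))))"
    by (simp only: twist_poly.simps xL.peval_diff xL.peval_minus xL.peval_pCons_0 xL.peval_monom
        xL.peval_const) simp
  also have "cmp C (x L) (xL.pev (twist_poly n)) = cmp C (xL.pev (twist_poly n)) (x L)"
    by (rule xL.peval_commute[symmetric])
  finally show ?case using twist_x_cmp[OF g] Suc.IH by (simp add: bubble_eq_scalar)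
qed

lemma degree_twist_poly: "degree (twist_poly n) \<le> n - 1"
proof (induction n)
  case 0
  then show ?case by simp
next
  case (Suc n)
  have shifted: "degree (- pCons 0 (twist_poly n)) \<le> n"
  proof (cases "n = 0")
    case False
    then show ?thesis
      using Suc.IH degree_pCons_le[of 0 "twist_poly n"] by (simp only: degree_minus)
  qed simp
  have "degree (monom (1::'k) n - [:\<beta> n:]) \<le> n"
    by (rule degree_diff_le) (simp_all add: degree_monom_le)
  then show ?case using degree_diff_le[OF shifted] by simp
qed

lemma coeff_twist_poly:
  "coeff (twist_poly n) k
    = (if k < n then (-1)^k * \<beta> (n - 1 - k) - (if k = n - 1 \<and> odd n then 1 else 0) else 0)"
proof (induction n arbitrary: k)
  case 0
  then show ?case by simp
next
  case (Suc n)
  then show ?case by (cases k) (auto simp: coeff_monom)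
qed

lemma twist_peval_sum_monom:
  "finite I \<Longrightarrow> twist L (xL.pev (\<Sum>i\<in>I. monom (v i) i)) = xL.pev (\<Sum>i\<in>I. Polynomial.smult (v i) (twist_poly i))"
proof (induction I rule: finite_induct)
  case empty
  then show ?case by (simp add: twist_mzero)
next
  case (insert j I)
  have "twist L (xL.pev (monom (v j) j)) = xL.pev (Polynomial.smult (v j) (twist_poly j))"
    using twist_msc[of "mpow C (B L) (x L) j" L "v j"] mpow_simps[of "x L" "B L" j] twist_mpow[of j]
    by (simp add: xL.peval_monom xL.peval_smult)
  then show ?case
    using insert twist_madd[of "xL.pev (monom (v j) j)" L "xL.pev (\<Sum>i\<in>I. monom (v i) i)"]
    by (simp add: xL.peval_add)
qed

text \<open>Applying \<open>twist\<close> to \<open>m\<^sub>L(x) = 0\<close> yields an annihilating polynomial of degree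
  \<open>< deg m\<^sub>L\<close>, which must vanish.\<close>

lemma minpoly_twist_relation: "(\<Sum>j\<le>degree mL. coeff mL j * coeff (twist_poly j) a) = 0"
proof -
  define R where "R = (\<Sum>j\<le>degree mL. Polynomial.smult (coeff mL j) (twist_poly j))"
  have "xL.pev R = twist L (xL.pev (\<Sum>j\<le>degree mL. monom (coeff mL j) j))"
    unfolding R_def by (simp add: twist_peval_sum_monom)
  also have "\<dots> = mzero C (B L) (B L)"
    by (simp add: poly_as_sum_of_monoms minpoly_x_L(2) twist_mzero)
  finally have "xL.pev R = mzero C (B L) (B L)" .
  moreover have "degree R \<le> degree mL - 1"
    unfolding R_def
  proof (rule degree_sum_le)
    fix j assume "j \<in> {..degree mL}"
    then show "degree (Polynomial.smult (coeff mL j) (twist_poly j)) \<le> degree mL - 1"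
      using degree_twist_poly[of j] degree_smult_le[of "coeff mL j" "twist_poly j"] by simp
  qed simp
  ultimately have "R = 0"
  proof (rule_tac ccontr)
    assume "R \<noteq> 0" "xL.pev R = mzero C (B L) (B L)" "degree R \<le> degree mL - 1"
    then have "degree mL = 0" using minpoly_x_L(3)[of R] by simp
    then show False using \<open>R \<noteq> 0\<close> unfolding R_def by simp
  qed
  moreover have "coeff R a = (\<Sum>j\<le>degree mL. coeff mL j * coeff (twist_poly j) a)"
    unfolding R_def by (simp add: coeff_sum)
  ultimately show ?thesis by simp
qed

lemma bubble_generating_function: "1 - 2 * Abs_fps \<beta> = ratio_at_infty mL"
proof (rule ratio_at_infty_eq_if_coeffs[OF minpoly_x_L(1)])
  fix k
  have twist: "\<And>a. (\<Sum>j\<le>degree mL. coeff mL j * (if a < j then (-1)^a * \<beta> (j - 1 - a)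
      - (if a = j - 1 \<and> odd j then 1 else 0) else 0)) = 0"
    using minpoly_twist_relation unfolding coeff_twist_poly .
  show "(\<Sum>i=0..k. \<beta> i * (if k - i > degree mL then 0 else coeff mL (degree mL - (k - i))))
      = (if k \<le> degree mL \<and> odd (degree mL - k) then coeff mL (degree mL - k) else 0)"
  proof (cases "k < degree mL")
    case True
    then show ?thesis using sum_mult_reflected_low[OF True twist] by simp
  next
    case False
    then show ?thesis using sum_mult_reflected_high[OF _ minpoly_bubble_relation, of k] by simp
  qed
qed

end

theorem theorem3p10:
  fixes C :: "('o, 'm, 'k::field) lincat" and M :: "('o, 'm) nbdata"
    and t :: nat and L :: 'o
  assumes "(2::'k) \<noteq> 0"
    and "t \<in> {0, 1}"
    and "is_nb_module C t M"
    and "special C M L"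
  shows "O_L C t M L = fps_const ((-1) ^ t) * ratio_at_infty (m_L C M L)"
proof -
  interpret special_object C t M L
    using assms(3,4) by unfold_locales
  show ?thesis
    unfolding O_L_def using bubble_generating_function by simp
qed

end
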